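(* Let $\lambda_1,\dots,\lambda_n$ be positive integers, $L=\mathrm{lcm}(\lambda_1,\dots,\lambda_n)$, $\omega_i=L/\lambda_i$, and $\Lambda=\langle1/\lambda_1,\dots,1/\lambda_n\rangle$ the additive submonoid of $\mathbb{Q}_{\ge}$ they generate. If $\Lambda$ is quasinormal, then $L+1$ lies in the additive submonoid $\langle\omega_1,\dots,\omega_n\rangle$ of $\mathbb{N}$ generated by $\omega_1,\dots,\omega_n$.
   Context: A submonoid $S$ of $\mathbb{Q}_{\ge}$ is quasinormal if whenever $x\in S$ and $x\ge p$ for a positive integer $p$, there exist $y_1,\dots,y_p\in S$ with $y_i\ge1$ for all $i$ and $x=y_1+\cdots+y_p$. *)

theory Defs
  imports Complex_Main
begin

inductive_set add_submonoid_gen :: "'a::monoid_add set \<Rightarrow> 'a set" for G where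
  zero: "0 \<in> add_submonoid_gen G"
| add: "x \<in> G \<Longrightarrow> y \<in> add_submonoid_gen G \<Longrightarrow> x + y \<in> add_submonoid_gen G"

definition quasinormal :: "rat set \<Rightarrow> bool" where
  "quasinormal S \<longleftrightarrow>
     (\<forall>x\<in>S. \<forall>p::nat. 0 < p \<and> of_nat p \<le> x \<longrightarrow>
        (\<exists>y::nat \<Rightarrow> rat. (\<forall>i<p. y i \<in> S \<and> 1 \<le> y i) \<and> x = (\<Sum>i<p. y i)))"

end

theory Submission
  imports Defs
begin

text \<open>Scaling by \<open>L\<close> identifies \<open>\<Lambda>\<close> with the numerical monoid
  \<open>\<langle>\<omega>\<^sub>1, \<dots>, \<omega>\<^sub>n\<rangle>\<close>, and the \<open>\<omega>\<^sub>i\<close> have greatest common divisor 1. By Bezout, with coefficients made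
  nonnegative by adding multiples of \<open>\<lambda>\<^sub>i = L / \<omega>\<^sub>i\<close>, the monoid contains \<open>p L + 1\<close> for some \<open>p > 0\<close>.
  Quasinormality splits \<open>p + 1/L\<close> into \<open>p\<close> elements of \<open>\<Lambda>\<close>, each at least \<open>1\<close>;
  after scaling, these are \<open>p\<close> elements, each at least \<open>L\<close>, summing to \<open>p L + 1\<close>,
  so one of them is \<open>L + 1\<close>.\<close>

lemma add_submonoid_gen_add:
  "x \<in> add_submonoid_gen G \<Longrightarrow> y \<in> add_submonoid_gen G \<Longrightarrow> x + y \<in> add_submonoid_gen G"
proof (induction x rule: add_submonoid_gen.induct)
  case zero
  then show ?case by simp
next
  case (add g x)
  then show ?case by (metis add_submonoid_gen.add add.assoc)
qed

lemma add_submonoid_gen_mult: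
  "(w::nat) \<in> G \<Longrightarrow> k * w \<in> add_submonoid_gen G"
  by (induction k) (simp_all add: add_submonoid_gen.zero add_submonoid_gen.add)

lemma add_submonoid_gen_sum:
  "finite W \<Longrightarrow> W \<subseteq> G \<Longrightarrow> (\<Sum>w\<in>W. f w * w) \<in> add_submonoid_gen (G::nat set)"
  by (induction W rule: finite_induct)
     (simp_all add: add_submonoid_gen.zero add_submonoid_gen_add add_submonoid_gen_mult)

lemma add_submonoid_gen_image:
  fixes f :: "'a::monoid_add \<Rightarrow> 'b::monoid_add"
  assumes f_zero: "f 0 = 0" and f_add: "\<And>x y. f (x + y) = f x + f y"
  shows "add_submonoid_gen (f ` G) = f ` add_submonoid_gen G"
proof (intro equalityI subsetI)
  fix x assume "x \<in> add_submonoid_gen (f ` G)"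
  then show "x \<in> f ` add_submonoid_gen G"
  proof (induction x rule: add_submonoid_gen.induct)
    case zero
    show ?case using add_submonoid_gen.zero f_zero by (metis image_eqI)
  next
    case (add x y)
    then show ?case by (auto simp flip: f_add intro: add_submonoid_gen.add)
  qed
next
  fix x assume "x \<in> f ` add_submonoid_gen G"
  then obtain z where "z \<in> add_submonoid_gen G" "x = f z" by blast
  then show "x \<in> add_submonoid_gen (f ` G)"
  proof (induction z arbitrary: x rule: add_submonoid_gen.induct)
    case zero
    then show ?case using add_submonoid_gen.zero f_zero by simp
  next
    case (add g z)
    then show ?case by (simp add: f_add add_submonoid_gen.add)
  qed
qed

lemma bezout_Gcd_nat: "finite (A::nat set) \<Longrightarrow> \<exists>c. int (Gcd A) = (\<Sum>a\<in>A. c a * int a)"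
proof (induction A rule: finite_induct)
  case empty
  then show ?case by simp
next
  case (insert a A)
  then obtain c where c: "int (Gcd A) = (\<Sum>b\<in>A. c b * int b)" by blast
  obtain u v where uv: "u * int a + v * int (Gcd A) = gcd (int a) (int (Gcd A))"
    using bezout_int by blast
  define c' where "c' = (\<lambda>b. if b = a then u else v * c b)"
  have sum_c': "(\<Sum>b\<in>A. c' b * int b) = v * (\<Sum>b\<in>A. c b * int b)"
    unfolding c'_def using insert.hyps by (auto simp: sum_distrib_left intro!: sum.cong)
  have "int (Gcd (insert a A)) = u * int a + v * int (Gcd A)"
    using uv by simp
  also have "\<dots> = (\<Sum>b\<in>insert a A. c' b * int b)"
    using c insert.hyps sum_c' by (simp add: c'_def)
  finally show ?case by blast
qed

lemma Gcd_Lcm_div_eq_1: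
  fixes A :: "nat set"
  assumes "finite A" "0 \<notin> A" "A \<noteq> {}"
  shows "Gcd ((\<lambda>a. Lcm A div a) ` A) = 1"
proof -
  define L where "L = Lcm A"
  define d where "d = Gcd ((\<lambda>a. L div a) ` A)"
  have "L \<noteq> 0" unfolding L_def using assms by (simp add: Lcm_0_iff)
  have d_dvd: "d dvd L div a" if "a \<in> A" for a
    unfolding d_def using that by simp
  have a_dvd: "a dvd L" if "a \<in> A" for a
    unfolding L_def using that by simp
  obtain a0 where "a0 \<in> A" using assms(3) by blast
  then have "d dvd L"
    using d_dvd a_dvd by (metis dvd_div_mult_self dvd_mult2)
  with \<open>L \<noteq> 0\<close> have "d \<noteq> 0" by auto
  have "a dvd L div d" if "a \<in> A" for a
  proof -
    have "a * d dvd a * (L div a)" using d_dvd[OF that] by simp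
    then have "a * d dvd L" using a_dvd[OF that] by simp
    then show ?thesis using \<open>d \<noteq> 0\<close> \<open>d dvd L\<close> by (simp add: dvd_div_iff_mult)
  qed
  then have "L dvd L div d" unfolding L_def by (simp add: Lcm_least)
  then have "L * d dvd L * 1"
    using \<open>d dvd L\<close> by (metis dvd_div_mult_self mult_dvd_mono dvd_refl mult_1_right)
  then have "d = 1" using \<open>L \<noteq> 0\<close> by simp
  then show ?thesis unfolding d_def L_def .
qed

lemma Gcd_eq_1_imp_mult_plus_1_mem:
  fixes W :: "nat set"
  assumes "finite W" "Gcd W = 1" "0 < L" "\<forall>w\<in>W. w dvd L"
  shows "\<exists>p>0. p * L + 1 \<in> add_submonoid_gen W"
proof -
  obtain c where c: "1 = (\<Sum>w\<in>W. c w * int w)"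
    using bezout_Gcd_nat[OF assms(1)] assms(2) by auto
  define t where "t w = nat \<bar>c w\<bar> + 1" for w
  define a where "a w = nat (c w + int (t w * (L div w)))" for w
  have "W \<noteq> {}" using assms(2) by auto
  then have "0 < (\<Sum>w\<in>W. t w)" unfolding t_def using assms(1) by (simp add: sum_pos)
  have a_eq: "int (a w * w) = c w * int w + int (t w * L)" if "w \<in> W" for w
  proof -
    have "w dvd L" using assms(4) that by blast
    then have "L div w \<noteq> 0" using dvd_div_eq_0_iff[OF \<open>w dvd L\<close>] \<open>0 < L\<close> by simp
    then have "1 \<le> L div w" by simp
    then have "\<bar>c w\<bar> \<le> \<bar>c w\<bar> * int (L div w)" by (simp add: mult_le_cancel_left1)
    moreover have "int (t w * (L div w)) = int (L div w) + \<bar>c w\<bar> * int (L div w)"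
      unfolding t_def by (simp add: algebra_simps)
    ultimately have "0 \<le> c w + int (t w * (L div w))" by linarith
    moreover have "int w * int (L div w) = int L" using \<open>w dvd L\<close> by (simp flip: of_nat_mult)
    ultimately show ?thesis unfolding a_def by (simp add: algebra_simps)
  qed
  have "int (\<Sum>w\<in>W. a w * w) = (\<Sum>w\<in>W. c w * int w + int (t w * L))"
    unfolding of_nat_sum using a_eq by (rule sum.cong[OF refl])
  also have "\<dots> = (\<Sum>w\<in>W. c w * int w) + int ((\<Sum>w\<in>W. t w) * L)"
    by (simp add: sum.distrib sum_distrib_right)
  also have "\<dots> = int ((\<Sum>w\<in>W. t w) * L + 1)"
    using c by simp
  finally have "(\<Sum>w\<in>W. a w * w) = (\<Sum>w\<in>W. t w) * L + 1"
    by (simp only: of_nat_eq_iff)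
  moreover have "(\<Sum>w\<in>W. a w * w) \<in> add_submonoid_gen W"
    using assms(1) add_submonoid_gen_sum by blast
  ultimately show ?thesis using \<open>0 < (\<Sum>w\<in>W. t w)\<close> by metis
qed

lemma add_submonoid_gen_inverses_eq_scaled:
  fixes A :: "nat set"
  assumes "finite A" "0 \<notin> A"
  shows "add_submonoid_gen ((\<lambda>a. 1 / of_nat a :: rat) ` A)
    = (\<lambda>m. of_nat m / of_nat (Lcm A)) ` add_submonoid_gen ((\<lambda>a. Lcm A div a) ` A)"
proof -
  have "Lcm A \<noteq> 0" using assms by (simp add: Lcm_0_iff)
  have "of_nat (Lcm A div a) / of_nat (Lcm A) = (1 / of_nat a :: rat)" if "a \<in> A" for a
    using dvd_Lcm[OF that] \<open>Lcm A \<noteq> 0\<close> by (auto simp: field_simps elim!: dvdE)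
  then have "(\<lambda>a. 1 / of_nat a :: rat) ` A
      = (\<lambda>m. of_nat m / of_nat (Lcm A)) ` (\<lambda>a. Lcm A div a) ` A"
    unfolding image_image by (metis (no_types, lifting) image_cong)
  then show ?thesis
    by (simp add: add_submonoid_gen_image add_divide_distrib)
qed

lemma quasinormal_scaled_split:
  fixes S :: "nat set" and L N p :: nat
  assumes qn: "quasinormal ((\<lambda>m. of_nat m / of_nat L :: rat) ` S)"
    and "0 < L" "N \<in> S" "0 < p" "p * L \<le> N"
  shows "\<exists>m. (\<forall>i<p. m i \<in> S \<and> L \<le> m i) \<and> N = (\<Sum>i<p. m i)"
proof -
  have "of_nat p \<le> (of_nat N / of_nat L :: rat)"
    using assms(2,5) by (simp add: le_divide_eq flip: of_nat_mult)
  then obtain y :: "nat \<Rightarrow> rat" where y: "\<forall>i<p. y i \<in> (\<lambda>m. of_nat m / of_nat L) ` S \<and> 1 \<le> y i"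
    and sum_y: "of_nat N / of_nat L = (\<Sum>i<p. y i)"
    using qn[unfolded quasinormal_def, rule_format, OF imageI[OF \<open>N \<in> S\<close>], of p] \<open>0 < p\<close>
    by blast
  then have "\<forall>i<p. \<exists>k. k \<in> S \<and> y i = of_nat k / of_nat L" by blast
  then obtain m where m: "\<And>i. i < p \<Longrightarrow> m i \<in> S \<and> y i = of_nat (m i) / of_nat L"
    by metis
  have "L \<le> m i" if "i < p" for i
  proof -
    have "1 \<le> (of_nat (m i) / of_nat L :: rat)" using y m that by metis
    then show ?thesis using \<open>0 < L\<close> by (simp add: le_divide_eq_1_pos)
  qed
  moreover have "(\<Sum>i<p. y i) = of_nat (\<Sum>i<p. m i) / of_nat L"
    using m by (simp add: sum_divide_distrib)
  then have "(of_nat N :: rat) = of_nat (\<Sum>i<p. m i)"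
    using sum_y \<open>0 < L\<close> by (simp del: of_nat_sum)
  then have "N = (\<Sum>i<p. m i)" by (simp only: of_nat_eq_iff)
  ultimately show ?thesis using m by blast
qed

lemma sum_eq_card_mult_plus_1_imp_ex:
  fixes m :: "'a \<Rightarrow> nat"
  assumes "finite I" "\<forall>i\<in>I. L \<le> m i" "(\<Sum>i\<in>I. m i) = card I * L + 1"
  shows "\<exists>i\<in>I. m i = L + 1"
proof -
  have "(\<Sum>i\<in>I. m i) = (\<Sum>i\<in>I. (m i - L) + L)"
    using assms(2) by (intro sum.cong) auto
  also have "\<dots> = (\<Sum>i\<in>I. m i - L) + card I * L"
    by (simp add: sum.distrib)
  finally have "(\<Sum>i\<in>I. m i) = (\<Sum>i\<in>I. m i - L) + card I * L" .
  then have excess: "(\<Sum>i\<in>I. m i - L) = 1" using assms(3) by simp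
  then obtain i where "i \<in> I" "m i - L \<noteq> 0"
    by (metis (no_types, lifting) sum.neutral zero_neq_one)
  moreover have "m i - L \<le> 1"
    using member_le_sum[of i I "\<lambda>i. m i - L"] excess \<open>i \<in> I\<close> assms(1) by simp
  moreover have "L \<le> m i" using assms(2) \<open>i \<in> I\<close> by blast
  ultimately have "m i = L + 1" by arith
  with \<open>i \<in> I\<close> show ?thesis by blast
qed

theorem proposition4p9:
  fixes n :: nat and lam :: "nat \<Rightarrow> nat"
  assumes n_pos: "1 \<le> n"
    and lam_pos: "\<forall>i\<in>{1..n}. 0 < lam i"
    and qn: "quasinormal (add_submonoid_gen ((\<lambda>i. 1 / of_nat (lam i) :: rat) ` {1..n}))"
  shows "Lcm (lam ` {1..n}) + 1
           \<in> add_submonoid_gen ((\<lambda>i. Lcm (lam ` {1..n}) div lam i) ` {1..n})"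
proof -
  define A where "A = lam ` {1..n}"
  define W where "W = (\<lambda>a. Lcm A div a) ` A"
  have A: "finite A" "0 \<notin> A" "A \<noteq> {}"
    unfolding A_def using lam_pos n_pos by auto
  then have "0 < Lcm A" by (metis Lcm_0_iff neq0_conv)
  have "\<forall>w\<in>W. w dvd Lcm A"
    unfolding W_def by (metis dvd_Lcm dvd_div_mult_self dvd_triv_left imageE)
  then obtain p where "0 < p" and N: "p * Lcm A + 1 \<in> add_submonoid_gen W"
    using Gcd_eq_1_imp_mult_plus_1_mem Gcd_Lcm_div_eq_1[OF A] A(1) \<open>0 < Lcm A\<close>
    unfolding W_def by blast
  have "quasinormal ((\<lambda>m. of_nat m / of_nat (Lcm A) :: rat) ` add_submonoid_gen W)"
    using qn add_submonoid_gen_inverses_eq_scaled[OF A(1,2)]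
    unfolding W_def A_def image_image by simp
  then obtain m where m: "\<forall>i<p. m i \<in> add_submonoid_gen W \<and> Lcm A \<le> m i"
    and "(\<Sum>i<p. m i) = card {..<p} * Lcm A + 1"
    using quasinormal_scaled_split[OF _ \<open>0 < Lcm A\<close> N \<open>0 < p\<close>] by fastforce
  then obtain i where "i < p" "m i = Lcm A + 1"
    using sum_eq_card_mult_plus_1_imp_ex[of "{..<p}" "Lcm A" m] by auto
  moreover have "m i \<in> add_submonoid_gen W" using m \<open>i < p\<close> by blast
  ultimately show ?thesis unfolding W_def A_def image_image by simp
qed

end
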